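(* Let $H=F[1/t]\subseteq\mathbb{Q}[t,1/t]$. Then $H$ equals the set of all $f(t)\in\mathbb{Q}[t,1/t]$ such that $f(a)\in\mathbb{Z}[1/a]$ for every positive integer $a$.
   Context: $F\subseteq\mathbb{Q}[t]$ is the ring of numerical polynomials, i.e. polynomials $f(t)\in\mathbb{Q}[t]$ with $f(n)\in\mathbb{Z}$ for all integers $n\gg0$; it is free abelian with basis $\alpha_n=\binom tn$, $n\ge0$. $H=F[1/t]$ is the localization of $F$ at $t$, viewed as a subring of $\mathbb{Q}[t,1/t]$. *)

theory Defs
  imports "HOL-Computational_Algebra.Polynomial"
begin

definition numerical_poly :: "rat poly \<Rightarrow> bool" where
  "numerical_poly f \<longleftrightarrow> (\<exists>N::int. \<forall>n::int. n \<ge> N \<longrightarrow> poly f (of_int n) \<in> \<int>)"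

text \<open>An element of Q[t,1/t] is represented as p(t)/t^k with p in Q[t], k in N.
  Two representatives (p,k), (q,m) are equal in Q[t,1/t] iff p * t^m = q * t^k.\<close>
definition laurent_eq :: "rat poly \<Rightarrow> nat \<Rightarrow> rat poly \<Rightarrow> nat \<Rightarrow> bool" where
  "laurent_eq p k q m \<longleftrightarrow> p * monom 1 m = q * monom 1 k"

definition in_H :: "rat poly \<Rightarrow> nat \<Rightarrow> bool" where
  "in_H p k \<longleftrightarrow> (\<exists>f m. numerical_poly f \<and> laurent_eq p k f m)"

definition laurent_eval :: "rat poly \<Rightarrow> nat \<Rightarrow> rat \<Rightarrow> rat" where
  "laurent_eval p k a = poly p a / a ^ k"

definition Z_inv :: "int \<Rightarrow> rat set" where
  "Z_inv a = {x. \<exists>(z::int) (n::nat). x = of_int z / of_int a ^ n}"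

end

theory Submission
  imports Defs "HOL-Computational_Algebra.Primes"
begin

text \<open>
  If \<open>p(t)/t^k = f(t)/t^m\<close> with \<open>f\<close> numerical, then \<open>f(a)\<close> is an integer for every integer \<open>a\<close>
  (the forward difference lowers the degree, so integrality propagates from large arguments to
  all of them), whence \<open>p(a)/a^k = f(a)/a^m \<in> \<int>[1/a]\<close>.
  Conversely, let \<open>D\<close> be a common denominator of the coefficients of \<open>p\<close>. For \<open>a > 0\<close> the
  reduced denominator \<open>y\<close> of \<open>p(a)\<close> divides both \<open>D\<close> and a power of \<open>a\<close>; every prime factor of
  \<open>y\<close> then divides \<open>a\<close>, so \<open>y\<close> divides \<open>a^y\<close> and hence \<open>a^D\<close>. Thus \<open>t^D p(t)\<close> is integer valued
  at all positive integers, and \<open>p(t)/t^k = t^D p(t) / t^(k+D)\<close> lies in \<open>H\<close>.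
\<close>

definition forward_diff :: "'a::comm_ring_1 poly \<Rightarrow> 'a poly" where
  "forward_diff f = pcompose f [:1, 1:] - f"

lemma poly_forward_diff: "poly (forward_diff f) x = poly f (x + 1) - poly f x"
  unfolding forward_diff_def by (simp add: poly_pcompose algebra_simps)

lemma degree_forward_diff_less:
  fixes f :: "'a::idom poly"
  assumes "degree f > 0"
  shows "degree (forward_diff f) < degree f"
proof -
  let ?g = "pcompose f [:1, 1:]"
  have deg: "degree ?g = degree f"
    by (simp add: degree_pcompose)
  have "coeff ?g (degree f) = lead_coeff f"
    using lead_coeff_comp[of "[:1, 1:]" f] deg by simp
  then have "coeff (forward_diff f) (degree f) = 0"
    by (simp add: forward_diff_def)
  moreover have "degree (forward_diff f) \<le> degree f"
    unfolding forward_diff_def using deg by (intro degree_diff_le) simp_all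
  ultimately show ?thesis
    using assms by (metis leading_coeff_0_iff degree_0 le_neq_implies_less not_gr_zero)
qed

lemma poly_in_Ints_if_eventually_in_Ints:
  fixes f :: "'a::{idom, ring_char_0} poly"
  assumes "\<And>n::int. n \<ge> N \<Longrightarrow> poly f (of_int n) \<in> \<int>"
  shows "poly f (of_int n) \<in> \<int>"
  using assms
proof (induction "degree f" arbitrary: f n rule: less_induct)
  case less
  show ?case
  proof (cases "degree f = 0")
    case True
    then obtain c where "f = [:c:]"
      by (metis degree_eq_zeroE)
    then show ?thesis
      using less.prems[of N] by simp
  next
    case False
    have diff_Ints: "poly (forward_diff f) (of_int n) \<in> \<int>" for n :: int
    proof (rule less.hyps)
      show "degree (forward_diff f) < degree f"
        using False by (simp add: degree_forward_diff_less)
    next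
      fix n :: int
      assume "n \<ge> N"
      then have "poly f (of_int (n + 1)) \<in> \<int>" "poly f (of_int n) \<in> \<int>"
        using less.prems[of "n + 1"] less.prems[of n] by simp_all
      then show "poly (forward_diff f) (of_int n) \<in> \<int>"
        by (metis poly_forward_diff Ints_diff of_int_add of_int_1)
    qed
    have "poly f (of_int (N - int j)) \<in> \<int>" for j :: nat
    proof (induction j)
      case 0
      then show ?case
        using less.prems by simp
    next
      case (Suc j)
      let ?x = "of_int (N - int (Suc j)) :: 'a"
      have "poly f ?x = poly f (of_int (N - int j)) - poly (forward_diff f) ?x"
        by (simp add: poly_forward_diff algebra_simps)
      then show ?case
        using Suc diff_Ints by (metis Ints_diff)
    qed
    moreover have "n \<ge> N \<or> n = N - int (nat (N - n))"
      by auto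
    ultimately show ?thesis
      using less.prems by metis
  qed
qed

lemma mult_in_Ints_iff_denom_dvd:
  assumes "quotient_of r = (x, y)"
  shows "of_int c * r \<in> \<int> \<longleftrightarrow> y dvd c"
proof
  have r: "r = of_int x / of_int y" and y: "y > 0" and cop: "coprime x y"
    using assms quotient_of_div quotient_of_denom_pos quotient_of_coprime by blast+
  {
    assume "of_int c * r \<in> \<int>"
    then obtain w where "of_int c * r = of_int w"
      by (elim Ints_cases)
    then have "c * x = w * y"
      using r y by (simp add: field_simps flip: of_int_mult of_int_eq_iff)
    then show "y dvd c"
      using cop by (metis coprime_commute coprime_dvd_mult_left_iff dvd_triv_right)
  next
    assume "y dvd c"
    then obtain u where "c = y * u" ..
    then have "of_int c * r = of_int (u * x)"
      using r y by simp
    then show "of_int c * r \<in> \<int>"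
      by simp
  }
qed

lemma poly_common_denominator:
  fixes p :: "rat poly"
  obtains D :: int where "D > 0" "\<And>a::int. of_int D * poly p (of_int a) \<in> \<int>"
proof
  let ?den = "\<lambda>i. snd (quotient_of (coeff p i))"
  define D where "D = (\<Prod>i\<le>degree p. ?den i)"
  show "D > 0"
    unfolding D_def by (intro prod_pos) (metis prod.collapse quotient_of_denom_pos)
  have coeff_Ints: "of_int D * coeff p i \<in> \<int>" if "i \<le> degree p" for i
  proof -
    have "?den i dvd D"
      unfolding D_def using that by (intro dvd_prodI) auto
    then show ?thesis
      by (metis mult_in_Ints_iff_denom_dvd prod.collapse)
  qed
  fix a :: int
  have "of_int D * poly p (of_int a) = (\<Sum>i\<le>degree p. (of_int D * coeff p i) * of_int a ^ i)"
    by (simp add: poly_altdef sum_distrib_left algebra_simps)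
  also have "\<dots> \<in> \<int>"
    by (auto intro!: Ints_sum Ints_mult coeff_Ints)
  finally show "of_int D * poly p (of_int a) \<in> \<int>" .
qed

text \<open>
  A positive \<open>y\<close> dividing a power of \<open>a\<close> divides \<open>a^y\<close>: the number of prime factors of \<open>y\<close>,
  each of which divides \<open>a\<close>, is less than \<open>y\<close>.
\<close>
lemma dvd_power_self_if_dvd_power:
  fixes a y :: int
  assumes "y > 0" "y dvd a ^ n"
  shows "y dvd a ^ nat y"
  using assms
proof (induction "nat y" arbitrary: y rule: less_induct)
  case less
  show ?case
  proof (cases "y = 1")
    case True
    then show ?thesis by simp
  next
    case False
    then obtain q where q: "q dvd y" "prime q"
      using prime_divisor_exists[of y] less.prems(1) by auto
    then have "q dvd a"
      using less.prems(2) prime_dvd_power dvd_trans by blast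
    obtain y' where y': "y = q * y'"
      using q(1) ..
    have "q > 1"
      using q(2) prime_gt_1_int by blast
    then have y'_pos: "y' > 0" and "y' < y"
      using less.prems(1) y' by (auto simp: zero_less_mult_iff)
    then have "nat y' < nat y"
      by simp
    moreover have "y' dvd a ^ n"
      using less.prems(2) y' by (metis dvd_mult_right)
    ultimately have "y' dvd a ^ nat y'"
      using less.hyps y'_pos by blast
    then have "y dvd a ^ Suc (nat y')"
      using y' \<open>q dvd a\<close> by (simp add: mult_dvd_mono)
    also have "\<dots> dvd a ^ nat y"
      using \<open>nat y' < nat y\<close> by (intro le_imp_power_dvd) (simp add: Suc_le_eq)
    finally show ?thesis .
  qed
qed

lemma power_mult_in_Ints_if_mult_in_Ints:
  fixes r :: rat and a D :: int
  assumes "D > 0" "of_int D * r \<in> \<int>" "of_int a ^ n * r \<in> \<int>"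
  shows "of_int a ^ nat D * r \<in> \<int>"
proof -
  obtain x y where xy: "quotient_of r = (x, y)"
    by (cases "quotient_of r")
  have "y dvd D" "y dvd a ^ n"
    using assms(2,3) mult_in_Ints_iff_denom_dvd[OF xy] by (simp_all flip: of_int_power)
  moreover have "y > 0"
    using xy by (rule quotient_of_denom_pos)
  ultimately have "y dvd a ^ nat y" "nat y \<le> nat D"
    using dvd_power_self_if_dvd_power zdvd_imp_le assms(1) by (auto simp: nat_mono)
  then have "y dvd a ^ nat D"
    by (meson dvd_trans le_imp_power_dvd)
  then show ?thesis
    using mult_in_Ints_iff_denom_dvd[OF xy] by (simp flip: of_int_power)
qed

lemma laurent_eval_in_Z_inv_if_in_H:
  assumes "in_H p k" "a > 0"
  shows "laurent_eval p k (of_int a) \<in> Z_inv a"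
proof -
  obtain f m where "numerical_poly f" and eq: "p * monom 1 m = f * monom 1 k"
    using assms(1) unfolding in_H_def laurent_eq_def by blast
  then obtain z where z: "poly f (of_int a) = of_int z"
    unfolding numerical_poly_def by (metis poly_in_Ints_if_eventually_in_Ints Ints_cases)
  have "poly p (of_int a) * of_int a ^ m = of_int z * (of_int a :: rat) ^ k"
    using arg_cong[OF eq, of "\<lambda>q. poly q (of_int a)"] z by (simp add: poly_monom)
  then have "laurent_eval p k (of_int a) = of_int z / of_int a ^ m"
    unfolding laurent_eval_def using assms(2) by (simp add: field_simps)
  then show ?thesis
    unfolding Z_inv_def by blast
qed

lemma in_H_if_laurent_eval_in_Z_inv:
  assumes "\<And>a::int. a > 0 \<Longrightarrow> laurent_eval p k (of_int a) \<in> Z_inv a"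
  shows "in_H p k"
proof -
  obtain D :: int where "D > 0" and D: "\<And>a::int. of_int D * poly p (of_int a) \<in> \<int>"
    using poly_common_denominator by blast
  define M where "M = nat D"
  have "poly (p * monom 1 M) (of_int a) \<in> \<int>" if "a \<ge> 1" for a :: int
  proof -
    obtain z n where "poly p (of_int a) / of_int a ^ k = of_int z / of_int a ^ n"
      using assms[of a] \<open>a \<ge> 1\<close> unfolding laurent_eval_def Z_inv_def by auto
    then have "of_int a ^ n * poly p (of_int a) = of_int (z * a ^ k)"
      using \<open>a \<ge> 1\<close> by (simp add: field_simps)
    then have "of_int a ^ M * poly p (of_int a) \<in> \<int>"
      unfolding M_def using \<open>D > 0\<close> D by (metis Ints_of_int power_mult_in_Ints_if_mult_in_Ints)
    then show ?thesis
      by (simp add: poly_monom mult.commute)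
  qed
  then have "numerical_poly (p * monom 1 M)"
    unfolding numerical_poly_def by blast
  moreover have "laurent_eq p k (p * monom 1 M) (k + M)"
    unfolding laurent_eq_def by (simp add: mult_monom mult.assoc add.commute)
  ultimately show ?thesis
    unfolding in_H_def by blast
qed

theorem lemma1p2:
  fixes p :: "rat poly" and k :: nat
  shows "in_H p k \<longleftrightarrow> (\<forall>a::int. a > 0 \<longrightarrow> laurent_eval p k (of_int a) \<in> Z_inv a)"
  using laurent_eval_in_Z_inv_if_in_H in_H_if_laurent_eval_in_Z_inv by blast

end
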